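(* Let $R$ be a finite commutative ring with identity and let $\mathfrak{m}$ be a maximal ideal of $R$ of maximum size among all maximal ideals. If $R/\mathfrak{m}$ has characteristic $2$, then $$\chi\big(\mathrm{Reg}(\Gamma(R))\big)=\omega\big(\mathrm{Reg}(\Gamma(R))\big)=\frac{|\mathrm{Reg}(R)|}{|R/\mathfrak{m}|-1}.$$
   Context: $Z(R)$ is the set of zero-divisors of $R$ (including $0$) and $\mathrm{Reg}(R)=R\setminus Z(R)$ is the set of regular elements. The total graph $T(\Gamma(R))$ is the simple graph with vertex set $R$ in which distinct $x,y$ are adjacent iff $x+y\in Z(R)$; $\mathrm{Reg}(\Gamma(R))$ is its induced subgraph on $\mathrm{Reg}(R)$. $\chi$ and $\omega$ denote chromatic and clique number. *)

theory Defs
  imports "HOL-Algebra.Algebra"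
begin

definition zero_divisors :: "('a, 'b) ring_scheme \<Rightarrow> 'a set" where
  "zero_divisors R = {x \<in> carrier R. \<exists>y \<in> carrier R. y \<noteq> \<zero>\<^bsub>R\<^esub> \<and> x \<otimes>\<^bsub>R\<^esub> y = \<zero>\<^bsub>R\<^esub>}"

definition regular_elements :: "('a, 'b) ring_scheme \<Rightarrow> 'a set" where
  "regular_elements R = carrier R - zero_divisors R"

definition total_graph_adj :: "('a, 'b) ring_scheme \<Rightarrow> 'a \<Rightarrow> 'a \<Rightarrow> bool" where
  "total_graph_adj R x y \<longleftrightarrow> x \<noteq> y \<and> x \<oplus>\<^bsub>R\<^esub> y \<in> zero_divisors R"

(* Simple graphs given by a vertex set V and a (symmetric, irreflexive) adjacency E *)
definition is_clique :: "'v set \<Rightarrow> ('v \<Rightarrow> 'v \<Rightarrow> bool) \<Rightarrow> 'v set \<Rightarrow> bool" where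
  "is_clique V E K \<longleftrightarrow> K \<subseteq> V \<and> (\<forall>x\<in>K. \<forall>y\<in>K. x \<noteq> y \<longrightarrow> E x y)"

definition clique_number :: "'v set \<Rightarrow> ('v \<Rightarrow> 'v \<Rightarrow> bool) \<Rightarrow> nat" where
  "clique_number V E = Max {card K | K. is_clique V E K}"

definition proper_colouring :: "'v set \<Rightarrow> ('v \<Rightarrow> 'v \<Rightarrow> bool) \<Rightarrow> nat \<Rightarrow> ('v \<Rightarrow> nat) \<Rightarrow> bool" where
  "proper_colouring V E k f \<longleftrightarrow> (\<forall>x\<in>V. f x < k) \<and> (\<forall>x\<in>V. \<forall>y\<in>V. E x y \<longrightarrow> f x \<noteq> f y)"

definition chromatic_number :: "'v set \<Rightarrow> ('v \<Rightarrow> 'v \<Rightarrow> bool) \<Rightarrow> nat" where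
  "chromatic_number V E = (LEAST k. \<exists>f. proper_colouring V E k f)"

definition ring_characteristic :: "('a, 'b) ring_scheme \<Rightarrow> nat" where
  "ring_characteristic S = (if \<exists>n::nat>0. [n] \<cdot>\<^bsub>S\<^esub> \<one>\<^bsub>S\<^esub> = \<zero>\<^bsub>S\<^esub>
                  then (LEAST n::nat. n > 0 \<and> [n] \<cdot>\<^bsub>S\<^esub> \<one>\<^bsub>S\<^esub> = \<zero>\<^bsub>S\<^esub>) else 0)"

end

theory Submission
  imports Defs
begin

text \<open>
  In a finite ring the regular elements are the units, i.e. the elements lying in no maximal
  ideal. Let \<open>H\<close> be the units congruent to \<open>1\<close> modulo \<open>m\<close>; since \<open>1 + 1 \<in> m\<close>, any
  two elements of \<open>H\<close> add up to an element of \<open>m\<close>, a zero-divisor, so \<open>H\<close> is a clique.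
  By the Chinese remainder theorem one picks in every nonzero class \<open>c\<close> of \<open>R/m\<close> a unit
  \<open>s c\<close> such that \<open>s c + s d\<close> is a unit for \<open>c \<noteq> d\<close>: modulo \<open>m\<close> take a representative
  of \<open>c\<close>; modulo a maximal ideal \<open>J\<close> with \<open>1 + 1 \<in> J\<close>, where sums and differences agree,
  take representatives of an injective image of the nonzero classes of \<open>R/m\<close> among those of
  \<open>R/J\<close>, which exists because \<open>|J| \<le> |m|\<close>; modulo every other \<open>J\<close> take \<open>1\<close>. Every unit
  is then uniquely \<open>h \<cdot> s c\<close> with \<open>h \<in> H\<close>, so \<open>|Reg R| = |H| (|R/m| - 1)\<close>, and colouring
  \<open>h \<cdot> s c\<close> by \<open>h\<close> is proper: two units of the same colour add up to the unit
  \<open>h (s c + s d)\<close>.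
\<close>

lemma card_clique_le_colours:
  assumes "is_clique V E K" and "proper_colouring V E k f"
  shows "card K \<le> k"
proof -
  have "inj_on f K" and "f ` K \<subseteq> {..<k}"
    using assms unfolding is_clique_def proper_colouring_def inj_on_def by (blast, auto)
  then show ?thesis
    using card_inj_on_le[of f K "{..<k}"] by simp
qed

lemma chromatic_number_eq_clique_number:
  assumes "finite V" and "is_clique V E K" and "proper_colouring V E (card K) f"
  shows "chromatic_number V E = card K" and "clique_number V E = card K"
proof -
  show "chromatic_number V E = card K"
    unfolding chromatic_number_def
    using assms(2,3) card_clique_le_colours by (blast intro: Least_equality)
  have "{card K' | K'. is_clique V E K'} \<subseteq> card ` Pow V"
    unfolding is_clique_def by blast
  then have "finite {card K' | K'. is_clique V E K'}"
    using assms(1) finite_surj by blast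
  then show "clique_number V E = card K"
    unfolding clique_number_def using assms(2,3) card_clique_le_colours by (blast intro: Max_eqI)
qed

context ideal begin

lemma rcos_eq_iff:
  assumes "x \<in> carrier R" and "y \<in> carrier R"
  shows "I +> x = I +> y \<longleftrightarrow> x \<ominus> y \<in> I"
  using a_rcos_module_minus[OF ring_axioms assms(2,1)] a_rcos_self[OF assms(1)]
    a_repr_independence'[OF _ assms(2)] by metis

lemma rcos_eq_self_iff:
  assumes "x \<in> carrier R"
  shows "I +> x = I \<longleftrightarrow> x \<in> I"
  using rcos_const_imp_mem[OF assms] a_rcos_const by blast

lemma rcos_mult_cong:
  assumes "x \<in> carrier R" "y \<in> carrier R" "z \<in> carrier R" and "I +> x = I +> y"
  shows "I +> (x \<otimes> z) = I +> (y \<otimes> z)"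
proof -
  have "x \<otimes> z \<ominus> y \<otimes> z = (x \<ominus> y) \<otimes> z"
    using assms(1-3) by algebra
  then show ?thesis
    using assms rcos_eq_iff I_r_closed by simp
qed

lemma rcos_representatives:
  "\<exists>r. \<forall>c\<in>a_rcosets I. r c \<in> carrier R \<and> I +> r c = c"
  using bchoice[of "a_rcosets I" "\<lambda>c x. x \<in> carrier R \<and> I +> x = c"]
  unfolding A_RCOSETS_def' by blast

lemma one_add_one_mem_if_characteristic_Quot_2:
  assumes "ring_characteristic (R Quot I) = 2"
  shows "\<one> \<oplus> \<one> \<in> I"
proof -
  interpret Q: ring "R Quot I" by (rule quotient_is_ring)
  let ?P = "\<lambda>n::nat. 0 < n \<and> [n] \<cdot>\<^bsub>R Quot I\<^esub> \<one>\<^bsub>R Quot I\<^esub> = \<zero>\<^bsub>R Quot I\<^esub>"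
  have "\<exists>n. ?P n"
    using assms unfolding ring_characteristic_def by (metis zero_neq_numeral)
  then have "?P (LEAST n. ?P n)" by (rule LeastI_ex)
  then have "[(2::nat)] \<cdot>\<^bsub>R Quot I\<^esub> \<one>\<^bsub>R Quot I\<^esub> = \<zero>\<^bsub>R Quot I\<^esub>"
    using assms unfolding ring_characteristic_def by (simp split: if_splits)
  then have "\<one>\<^bsub>R Quot I\<^esub> \<oplus>\<^bsub>R Quot I\<^esub> \<one>\<^bsub>R Quot I\<^esub> = \<zero>\<^bsub>R Quot I\<^esub>"
    by (simp add: numeral_2_eq_2 add_pow_def Q.add.nat_pow_Suc)
  moreover have "I +> (\<one> \<oplus> \<one>) = \<one>\<^bsub>R Quot I\<^esub> \<oplus>\<^bsub>R Quot I\<^esub> \<one>\<^bsub>R Quot I\<^esub>"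
    using ring_hom_add[OF rcos_ring_hom] ring_hom_one[OF rcos_ring_hom] by simp
  ultimately show ?thesis
    using rcos_eq_self_iff by (simp add: FactRing_def)
qed

lemma Units_notin:
  assumes "\<one> \<notin> I" and "u \<in> Units R"
  shows "u \<notin> I"
proof
  assume "u \<in> I"
  then have "inv u \<otimes> u \<in> I"
    using assms(2) by (intro I_l_closed Units_inv_closed)
  then show False
    using assms by simp
qed

lemma add_mem_iff_diff_mem:
  assumes "\<one> \<oplus> \<one> \<in> I" and "x \<in> carrier R" "y \<in> carrier R"
  shows "x \<oplus> y \<in> I \<longleftrightarrow> x \<ominus> y \<in> I"
proof -
  let ?t = "(\<one> \<oplus> \<one>) \<otimes> y"
  have t: "?t \<in> I"
    using assms(1,3) by (rule I_r_closed)
  have "x \<oplus> y = (x \<ominus> y) \<oplus> ?t" and "x \<ominus> y = (x \<oplus> y) \<oplus> \<ominus> ?t"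
    using assms(2,3) by algebra+
  then show ?thesis
    using t by (metis additive_subgroup.a_closed additive_subgroup.a_inv_closed is_additive_subgroup)
qed

end

lemma (in maximalideal) one_notin: "\<one> \<notin> I"
proof
  assume "\<one> \<in> I"
  then have "I = carrier R"
    by (rule one_imp_carrier)
  then show False
    using I_notcarr by argo
qed

context cring begin

lemma Units_not_zero_divisor:
  assumes "x \<in> Units R"
  shows "x \<notin> zero_divisors R"
proof
  assume "x \<in> zero_divisors R"
  then obtain y where y: "y \<in> carrier R" "y \<noteq> \<zero>" "x \<otimes> y = \<zero>"
    unfolding zero_divisors_def by blast
  have "y = inv x \<otimes> (x \<otimes> y)"
    using assms y(1) by (metis Units_closed Units_inv_closed Units_l_inv l_one m_assoc)
  then show False
    using y assms by simp
qed

lemma nonunit_zero_divisor: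
  assumes "finite (carrier R)" and x: "x \<in> carrier R" "x \<notin> Units R"
  shows "x \<in> zero_divisors R"
proof (rule ccontr)
  assume nzd: "x \<notin> zero_divisors R"
  have "inj_on ((\<otimes>) x) (carrier R)"
  proof (rule inj_onI)
    fix y z assume yz: "y \<in> carrier R" "z \<in> carrier R" "x \<otimes> y = x \<otimes> z"
    then have "x \<otimes> (y \<ominus> z) = \<zero>"
      using x by (simp add: r_distr minus_eq r_minus r_neg)
    then have "y \<ominus> z = \<zero>"
      using nzd x yz unfolding zero_divisors_def by blast
    then show "y = z"
      using yz by simp
  qed
  moreover have "(\<otimes>) x ` carrier R \<subseteq> carrier R"
    using x by blast
  ultimately have "(\<otimes>) x ` carrier R = carrier R"
    using assms(1) endo_inj_surj by blast
  then obtain y where "y \<in> carrier R" "x \<otimes> y = \<one>"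
    by (metis image_iff one_closed)
  then show False
    using x m_comm[of x y] unfolding Units_def by auto
qed

lemma regular_elements_eq_Units:
  assumes "finite (carrier R)"
  shows "regular_elements R = Units R"
  unfolding regular_elements_def
proof (intro equalityI subsetI)
  fix x assume "x \<in> carrier R - zero_divisors R"
  then show "x \<in> Units R"
    using nonunit_zero_divisor[OF assms, of x] by blast
next
  fix x assume "x \<in> Units R"
  then show "x \<in> carrier R - zero_divisors R"
    using Units_not_zero_divisor Units_closed by blast
qed

lemma nonunit_in_maximalideal:
  assumes "finite (carrier R)" and x: "x \<in> carrier R" "x \<notin> Units R"
  shows "\<exists>J. maximalideal J R \<and> x \<in> J"
proof -
  let ?P = "{I. ideal I R \<and> x \<in> I \<and> I \<noteq> carrier R}"
  have "?P \<subseteq> Pow (carrier R)"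
    by (auto dest: ideal.Icarr)
  then have fin: "finite ?P"
    using assms(1) finite_subset by blast
  have "PIdl x \<in> ?P"
  proof -
    have "PIdl x \<noteq> carrier R"
      using ideal_eq_carrier_iff[OF x(1)] x(2) by metis
    then show ?thesis
      using cgenideal_ideal[OF x(1)] cgenideal_self[OF x(1)] by blast
  qed
  then obtain J where J: "J \<in> ?P" and max: "\<forall>K\<in>?P. J \<subseteq> K \<longrightarrow> J = K"
    using finite_has_maximal[OF fin] by blast
  have "maximalideal J R"
  proof (rule maximalidealI)
    fix K assume "ideal K R" "J \<subseteq> K" "K \<subseteq> carrier R"
    then show "K = J \<or> K = carrier R"
      using J max by blast
  qed (use J in blast)+
  then show ?thesis
    using J by blast
qed

lemma Units_iff_not_in_maximalideals:
  assumes "finite (carrier R)"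
  shows "x \<in> Units R \<longleftrightarrow> x \<in> carrier R \<and> (\<forall>J. maximalideal J R \<longrightarrow> x \<notin> J)"
proof (intro iffI conjI allI impI)
  fix J assume "x \<in> Units R" and J: "maximalideal J R"
  then show "x \<notin> J"
    using ideal.Units_notin[OF maximalideal.axioms(1)[OF J] maximalideal.one_notin[OF J]] by blast
next
  assume "x \<in> carrier R \<and> (\<forall>J. maximalideal J R \<longrightarrow> x \<notin> J)"
  then show "x \<in> Units R"
    using nonunit_in_maximalideal[OF assms, of x] by blast
qed (rule Units_closed)

lemma maximalideals_add_eq_carrier:
  assumes "maximalideal J R" and "maximalideal K R" and "J \<noteq> K"
  shows "J <+> K = carrier R"
proof -
  interpret J: maximalideal J R by fact
  interpret K: maximalideal K R by fact
  have JK: "J <+> K = Idl (J \<union> K)"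
    by (rule union_genideal[OF J.is_ideal K.is_ideal, symmetric])
  have JK_carr: "J \<union> K \<subseteq> carrier R"
    using J.a_subset K.a_subset by blast
  have "J \<subseteq> J <+> K" and "K \<subseteq> J <+> K" and "ideal (J <+> K) R"
    unfolding JK using genideal_self[OF JK_carr] genideal_ideal[OF JK_carr] by auto
  moreover have "J <+> K \<subseteq> carrier R"
    using \<open>ideal (J <+> K) R\<close> by (blast dest: ideal.Icarr)
  ultimately have "J <+> K = J \<or> J <+> K = carrier R"
    by (intro J.I_maximal)
  moreover have "J <+> K \<noteq> J"
  proof
    assume "J <+> K = J"
    then have "J = K \<or> J = carrier R"
      using \<open>K \<subseteq> J <+> K\<close> by (intro K.I_maximal J.is_ideal J.a_subset) simp_all
    then show False
      using J.I_notcarr assms(3) by argo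
  qed
  ultimately show ?thesis
    by argo
qed

lemma exists_separating_element:
  assumes "finite M" and J: "maximalideal J R"
    and M: "\<And>K. K \<in> M \<Longrightarrow> maximalideal K R \<and> K \<noteq> J"
  shows "\<exists>e\<in>carrier R. (\<forall>K\<in>M. e \<in> K) \<and> \<one> \<ominus> e \<in> J"
  using assms(1,3)
proof (induction M rule: finite_induct)
  case empty
  have "\<one> \<ominus> \<one> \<in> J"
    using additive_subgroup.zero_closed[OF ideal.axioms(1)[OF maximalideal.axioms(1)[OF J]]]
    by (simp add: minus_eq r_neg)
  then show ?case
    using one_closed by blast
next
  case (insert K M)
  then obtain e where e: "e \<in> carrier R" "\<forall>K'\<in>M. e \<in> K'" "\<one> \<ominus> e \<in> J"
    by blast
  have K: "maximalideal K R" "K \<noteq> J"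
    using insert.prems by auto
  interpret J: maximalideal J R by fact
  interpret K: maximalideal K R by fact
  have "\<one> \<in> K <+> J"
    using maximalideals_add_eq_carrier[OF K(1) J K(2)] by simp
  then obtain a b where ab: "a \<in> K" "b \<in> J" "\<one> = a \<oplus> b"
    unfolding set_add_def' by blast
  have carr: "a \<in> carrier R" "b \<in> carrier R"
    using ab K.Icarr J.Icarr by auto
  have "\<one> \<ominus> e \<otimes> a = (\<one> \<ominus> e) \<oplus> e \<otimes> (\<one> \<ominus> a)"
    using carr e(1) by algebra
  also have "\<one> \<ominus> a = b"
    using ab(3) carr by algebra
  also have "(\<one> \<ominus> e) \<oplus> e \<otimes> b \<in> J"
    using e(3) J.I_l_closed[OF ab(2) e(1)] by (rule additive_subgroup.a_closed[OF J.is_additive_subgroup])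
  finally have "\<one> \<ominus> e \<otimes> a \<in> J" .
  moreover have "e \<otimes> a \<in> K'" if "K' \<in> insert K M" for K'
  proof -
    interpret K': ideal K' R
      using insert.prems that by (blast dest: maximalideal.axioms(1))
    show ?thesis
      using that e(1,2) ab(1) carr(1) K.I_l_closed K'.I_r_closed by blast
  qed
  ultimately show ?case
    using e(1) carr(1) by blast
qed

lemma chinese_remainder_maximalideals:
  assumes "finite M" and "\<And>K. K \<in> M \<Longrightarrow> maximalideal K R"
    and "\<And>K. K \<in> M \<Longrightarrow> a K \<in> carrier R"
  shows "\<exists>x\<in>carrier R. \<forall>K\<in>M. x \<ominus> a K \<in> K"
  using assms
proof (induction M rule: finite_induct)
  case empty
  show ?case by blast
next
  case (insert J M)
  then obtain y where y: "y \<in> carrier R" "\<forall>K\<in>M. y \<ominus> a K \<in> K"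
    by blast
  have J: "maximalideal J R" and aJ: "a J \<in> carrier R"
    using insert.prems by auto
  interpret J: maximalideal J R by fact
  obtain e where e: "e \<in> carrier R" "\<forall>K\<in>M. e \<in> K" "\<one> \<ominus> e \<in> J"
    using exists_separating_element[OF insert.hyps(1) J] insert.prems insert.hyps(2) by blast
  define x where "x = y \<oplus> e \<otimes> (a J \<ominus> y)"
  have "x \<ominus> a J = \<ominus> ((\<one> \<ominus> e) \<otimes> (a J \<ominus> y))"
    unfolding x_def using y(1) e(1) aJ by algebra
  also have "\<dots> \<in> J"
    using J.I_r_closed[OF e(3)] y(1) aJ
    by (intro additive_subgroup.a_inv_closed[OF J.is_additive_subgroup]) simp
  finally have "x \<ominus> a J \<in> J" .
  moreover have "x \<ominus> a K \<in> K" if "K \<in> M" for K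
  proof -
    interpret K: ideal K R
      using insert.prems that by (auto dest: maximalideal.axioms(1))
    have "a K \<in> carrier R"
      using insert.prems that by blast
    then have "x \<ominus> a K = (y \<ominus> a K) \<oplus> e \<otimes> (a J \<ominus> y)"
      unfolding x_def using y(1) e(1) aJ by algebra
    moreover have "e \<otimes> (a J \<ominus> y) \<in> K"
      using e(2) K.I_r_closed[of e "a J \<ominus> y"] y(1) aJ that by blast
    ultimately show ?thesis
      using y(2) that additive_subgroup.a_closed[OF K.is_additive_subgroup] by metis
  qed
  ultimately show ?case
    using y(1) e(1) aJ unfolding x_def by blast
qed

end

definition avoids_with_pairwise_sums :: "('a, 'b) ring_scheme \<Rightarrow> 'a set \<Rightarrow> 'c set \<Rightarrow> ('c \<Rightarrow> 'a) \<Rightarrow> bool"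
  where "avoids_with_pairwise_sums R J A t \<longleftrightarrow>
    (\<forall>c\<in>A. t c \<in> carrier R \<and> t c \<notin> J) \<and> (\<forall>c\<in>A. \<forall>d\<in>A. c \<noteq> d \<longrightarrow> t c \<oplus>\<^bsub>R\<^esub> t d \<notin> J)"

context ideal begin

lemma avoids_with_pairwise_sums_char2:
  assumes "\<one> \<oplus> \<one> \<in> I" and "\<And>c. c \<in> A \<Longrightarrow> t c \<in> carrier R"
    and "inj_on (\<lambda>c. I +> t c) A" and "\<And>c. c \<in> A \<Longrightarrow> I +> t c \<noteq> I"
  shows "avoids_with_pairwise_sums R I A t"
  unfolding avoids_with_pairwise_sums_def
proof (intro conjI ballI impI)
  fix c assume "c \<in> A"
  then show "t c \<in> carrier R" and "t c \<notin> I"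
    using assms(2,4) rcos_eq_self_iff by blast+
next
  fix c d assume cd: "c \<in> A" "d \<in> A" "c \<noteq> d"
  then have "I +> t c \<noteq> I +> t d"
    using assms(3) unfolding inj_on_def by blast
  then show "t c \<oplus> t d \<notin> I"
    using cd assms(2) rcos_eq_iff add_mem_iff_diff_mem[OF assms(1)] by blast
qed

lemma avoids_with_pairwise_sums_one:
  assumes "\<one> \<notin> I" and "\<one> \<oplus> \<one> \<notin> I"
  shows "avoids_with_pairwise_sums R I A (\<lambda>_. \<one>)"
  using assms unfolding avoids_with_pairwise_sums_def by blast

lemma avoids_with_pairwise_sums_cong:
  assumes "avoids_with_pairwise_sums R I A t"
    and "\<And>c. c \<in> A \<Longrightarrow> s c \<in> carrier R \<and> s c \<ominus> t c \<in> I"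
  shows "avoids_with_pairwise_sums R I A s"
proof -
  have t: "t c \<in> carrier R" if "c \<in> A" for c
    using assms(1) that unfolding avoids_with_pairwise_sums_def by blast
  have rcos: "I +> s c = I +> t c" if "c \<in> A" for c
    using assms(2) t that rcos_eq_iff by blast
  have sum: "I +> (s c \<oplus> s d) = I +> (t c \<oplus> t d)" if "c \<in> A" "d \<in> A" for c d
    using that rcos a_rcos_sum t assms(2) by metis
  show ?thesis
    unfolding avoids_with_pairwise_sums_def
  proof (intro conjI ballI impI)
    fix c assume c: "c \<in> A"
    then show "s c \<in> carrier R"
      using assms(2) by blast
    have "t c \<notin> I"
      using assms(1) c unfolding avoids_with_pairwise_sums_def by blast
    then show "s c \<notin> I"
      using rcos[OF c] rcos_eq_self_iff t[OF c] \<open>s c \<in> carrier R\<close> by metis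
  next
    fix c d assume cd: "c \<in> A" "d \<in> A" "c \<noteq> d"
    then have "t c \<oplus> t d \<notin> I"
      using assms(1) unfolding avoids_with_pairwise_sums_def by blast
    then show "s c \<oplus> s d \<notin> I"
      using sum[OF cd(1,2)] rcos_eq_self_iff t cd(1,2) assms(2) by (metis add.m_closed)
  qed
qed

end

context cring begin

lemma card_rcosets_le:
  assumes "finite (carrier R)" and "ideal I R" "ideal J R" and "card J \<le> card I"
  shows "card (a_rcosets I) \<le> card (a_rcosets J)"
proof -
  have "card (a_rcosets I) * card I = card (a_rcosets J) * card J"
    using a_lagrange[OF assms(1) ideal.axioms(1)[OF assms(2)]]
      a_lagrange[OF assms(1) ideal.axioms(1)[OF assms(3)]] by argo
  also have "\<dots> \<le> card (a_rcosets J) * card I"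
    using assms(4) by (rule mult_le_mono2)
  finally have le: "card (a_rcosets I) * card I \<le> card (a_rcosets J) * card I" .
  have "I \<subseteq> carrier R"
    using assms(2) by (blast dest: ideal.Icarr)
  then have "finite I"
    using assms(1) by (rule finite_subset)
  then have "card I > 0"
    using additive_subgroup.zero_closed[OF ideal.axioms(1)[OF assms(2)]] card_gt_0_iff by blast
  then show ?thesis
    using le by simp
qed

lemma exists_inj_nonzero_rcosets:
  assumes "finite (carrier R)" and I: "ideal I R" and J: "ideal J R" and "card J \<le> card I"
  shows "\<exists>t. (\<forall>c\<in>a_rcosets I - {I}. t c \<in> carrier R \<and> J +> t c \<noteq> J)
             \<and> inj_on (\<lambda>c. J +> t c) (a_rcosets I - {I})"
proof -
  interpret I: ideal I R by fact
  interpret J: ideal J R by fact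
  have "finite (Pow (carrier R))"
    using assms(1) by simp
  then have fin: "finite (a_rcosets I)" "finite (a_rcosets J)"
    using rcosets_subset_PowG[OF I.is_additive_subgroup] rcosets_subset_PowG[OF J.is_additive_subgroup]
      finite_subset by blast+
  have "card (a_rcosets I - {I}) = card (a_rcosets I) - 1"
    and "card (a_rcosets J - {J}) = card (a_rcosets J) - 1"
    by (rule card_Diff_singleton[OF I.a_subgroup_in_rcosets],
        rule card_Diff_singleton[OF J.a_subgroup_in_rcosets])
  then have "card (a_rcosets I - {I}) \<le> card (a_rcosets J - {J})"
    using card_rcosets_le[OF assms] by linarith
  then obtain f where f: "f ` (a_rcosets I - {I}) \<subseteq> a_rcosets J - {J}" "inj_on f (a_rcosets I - {I})"
    using card_le_inj[OF finite_Diff[OF fin(1), of "{I}"] finite_Diff[OF fin(2), of "{J}"]] by blast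
  obtain r where r: "\<And>c. c \<in> a_rcosets J \<Longrightarrow> r c \<in> carrier R \<and> J +> r c = c"
    using J.rcos_representatives by blast
  have rf: "r (f c) \<in> carrier R" "J +> r (f c) = f c" "f c \<noteq> J" if "c \<in> a_rcosets I - {I}" for c
    using f(1) r that by blast+
  show ?thesis
  proof (intro exI[of _ "\<lambda>c. r (f c)"] conjI ballI)
    fix c assume "c \<in> a_rcosets I - {I}"
    then show "r (f c) \<in> carrier R" and "J +> r (f c) \<noteq> J"
      using rf by metis+
  next
    show "inj_on (\<lambda>c. J +> r (f c)) (a_rcosets I - {I})"
      using inj_on_cong[of "a_rcosets I - {I}" "\<lambda>c. J +> r (f c)" f] rf(2) f(2) by blast
  qed
qed

lemma exists_avoiding_representatives:
  assumes fin: "finite (carrier R)" and m: "maximalideal m R"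
    and largest: "\<And>J. maximalideal J R \<Longrightarrow> card J \<le> card m" and two: "\<one> \<oplus> \<one> \<in> m"
    and J: "maximalideal J R"
  shows "\<exists>t. avoids_with_pairwise_sums R J (a_rcosets m - {m}) t
           \<and> (J = m \<longrightarrow> (\<forall>c\<in>a_rcosets m - {m}. m +> t c = c))"
proof -
  interpret m: maximalideal m R by fact
  interpret J: maximalideal J R by fact
  let ?C = "a_rcosets m - {m}"
  show ?thesis
  proof (cases "J = m")
    case True
    obtain r where r: "\<And>c. c \<in> a_rcosets m \<Longrightarrow> r c \<in> carrier R \<and> m +> r c = c"
      using m.rcos_representatives by blast
    have "avoids_with_pairwise_sums R m ?C r"
    proof (rule m.avoids_with_pairwise_sums_char2[OF two])
      show "inj_on (\<lambda>c. m +> r c) ?C"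
        using r unfolding inj_on_def by fastforce
    qed (use r in fastforce)+
    then show ?thesis
      using True r by blast
  next
    case False
    show ?thesis
    proof (cases "\<one> \<oplus> \<one> \<in> J")
      case True
      obtain t where t: "\<And>c. c \<in> ?C \<Longrightarrow> t c \<in> carrier R \<and> J +> t c \<noteq> J" "inj_on (\<lambda>c. J +> t c) ?C"
        using exists_inj_nonzero_rcosets[OF fin m.is_ideal J.is_ideal largest[OF J]] by blast
      have "avoids_with_pairwise_sums R J ?C t"
        by (rule J.avoids_with_pairwise_sums_char2[OF True]) (use t in blast)+
      then show ?thesis
        using False by blast
    next
      case two_notin: False
      show ?thesis
        using J.avoids_with_pairwise_sums_one[OF J.one_notin two_notin] False by blast
    qed
  qed
qed

end

locale unit_transversal = cring R for R (structure) +
  fixes m :: "'a set" and s :: "'a set \<Rightarrow> 'a"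
  assumes finite_carrier: "finite (carrier R)"
    and ideal_m: "ideal m R" and proper: "\<one> \<notin> m"
    and s_Units: "c \<in> a_rcosets m - {m} \<Longrightarrow> s c \<in> Units R"
    and rcos_s: "c \<in> a_rcosets m - {m} \<Longrightarrow> m +> s c = c"
    and s_add_Units: "\<lbrakk>c \<in> a_rcosets m - {m}; d \<in> a_rcosets m - {m}; c \<noteq> d\<rbrakk> \<Longrightarrow> s c \<oplus> s d \<in> Units R"
begin

sublocale m: ideal m R
  by (rule ideal_m)

definition principal_units :: "'a set"
  where "principal_units = {u \<in> Units R. m +> u = m +> \<one>}"

definition unit_part :: "'a \<Rightarrow> 'a"
  where "unit_part u = u \<otimes> inv (s (m +> u))"

lemma rcos_Units_mem:
  assumes "u \<in> Units R"
  shows "m +> u \<in> a_rcosets m - {m}"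
proof
  have u: "u \<in> carrier R"
    using assms by (rule Units_closed)
  then show "m +> u \<in> a_rcosets m"
    by (rule a_rcosetsI[OF m.a_subset])
  show "m +> u \<notin> {m}"
    using m.rcos_eq_self_iff[OF u] m.Units_notin[OF proper assms] by simp
qed

lemma rcos_principal_unit_mult:
  assumes "h \<in> principal_units" and "c \<in> a_rcosets m - {m}"
  shows "m +> (h \<otimes> s c) = c"
proof -
  have "h \<in> carrier R" and "s c \<in> carrier R"
    using assms s_Units unfolding principal_units_def by auto
  then have "m +> (h \<otimes> s c) = m +> (\<one> \<otimes> s c)"
    using assms(1) m.rcos_mult_cong unfolding principal_units_def by blast
  then show ?thesis
    using \<open>s c \<in> carrier R\<close> rcos_s[OF assms(2)] by simp
qed

lemma unit_part_mem:
  assumes "u \<in> Units R"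
  shows "unit_part u \<in> principal_units"
proof -
  let ?v = "s (m +> u)"
  have v: "?v \<in> Units R" "m +> ?v = m +> u"
    using s_Units rcos_s rcos_Units_mem[OF assms] by blast+
  then have "m +> (u \<otimes> inv ?v) = m +> (?v \<otimes> inv ?v)"
    using assms by (intro m.rcos_mult_cong) auto
  then show ?thesis
    using v assms unfolding principal_units_def unit_part_def by simp
qed

lemma unit_part_mult:
  assumes "u \<in> Units R"
  shows "unit_part u \<otimes> s (m +> u) = u"
  using assms s_Units[OF rcos_Units_mem[OF assms]]
  unfolding unit_part_def by (simp add: m_assoc Units_closed)

lemma unit_part_principal_unit_mult:
  assumes "h \<in> principal_units" and "c \<in> a_rcosets m - {m}"
  shows "unit_part (h \<otimes> s c) = h"
  using assms s_Units[OF assms(2)]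
  unfolding unit_part_def rcos_principal_unit_mult[OF assms] principal_units_def
  by (simp add: m_assoc Units_closed)

lemma bij_betw_principal_units_times_rcosets:
  "bij_betw (\<lambda>(h, c). h \<otimes> s c) (principal_units \<times> (a_rcosets m - {m})) (Units R)"
proof (rule bij_betw_byWitness[where f' = "\<lambda>u. (unit_part u, m +> u)"])
  show "\<forall>p\<in>principal_units \<times> (a_rcosets m - {m}). (unit_part (case p of (h, c) \<Rightarrow> h \<otimes> s c),
          m +> (case p of (h, c) \<Rightarrow> h \<otimes> s c)) = p"
    using unit_part_principal_unit_mult rcos_principal_unit_mult by auto
  show "\<forall>u\<in>Units R. (case (unit_part u, m +> u) of (h, c) \<Rightarrow> h \<otimes> s c) = u"
    using unit_part_mult by auto
  show "(\<lambda>(h, c). h \<otimes> s c) ` (principal_units \<times> (a_rcosets m - {m})) \<subseteq> Units R"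
    using s_Units unfolding principal_units_def by auto
  show "(\<lambda>u. (unit_part u, m +> u)) ` Units R \<subseteq> principal_units \<times> (a_rcosets m - {m})"
    using unit_part_mem rcos_Units_mem by auto
qed

lemma card_principal_units:
  "real (card principal_units) = real (card (Units R)) / (real (card (a_rcosets m)) - 1)"
proof -
  have "card (Units R) = card principal_units * card (a_rcosets m - {m})"
    using bij_betw_same_card[OF bij_betw_principal_units_times_rcosets] card_cartesian_product
    by metis
  moreover have "card (a_rcosets m - {m}) = card (a_rcosets m) - 1"
    using m.a_subgroup_in_rcosets by (rule card_Diff_singleton)
  moreover have "card (a_rcosets m - {m}) > 0"
  proof (rule card_gt_0_iff[THEN iffD2], rule conjI)
    have "a_rcosets m \<subseteq> Pow (carrier R)"
      by (rule rcosets_subset_PowG[OF m.is_additive_subgroup])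
    then have "finite (a_rcosets m)"
      using finite_Pow_iff[THEN iffD2, OF finite_carrier] by (rule finite_subset)
    then show "finite (a_rcosets m - {m})"
      by (rule finite_Diff)
    show "a_rcosets m - {m} \<noteq> {}"
      by (rule notI, erule equals0D[THEN notE], rule rcos_Units_mem[OF Units_one_closed])
  qed
  ultimately show ?thesis
    by (simp add: of_nat_diff)
qed

lemma principal_units_clique:
  assumes "\<one> \<oplus> \<one> \<in> m"
  shows "is_clique (Units R) (total_graph_adj R) principal_units"
  unfolding is_clique_def
proof (intro conjI ballI impI)
  show "principal_units \<subseteq> Units R"
    unfolding principal_units_def by blast
  fix x y assume "x \<in> principal_units" "y \<in> principal_units" "x \<noteq> y"
  then have xy: "x \<in> carrier R" "y \<in> carrier R" "m +> x = m +> \<one>" "m +> y = m +> \<one>"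
    unfolding principal_units_def by auto
  then have "m +> (x \<oplus> y) = (m +> x) <+> (m +> y)"
    by (intro m.a_rcos_sum[symmetric])
  also have "\<dots> = (m +> \<one>) <+> (m +> \<one>)"
    using xy(3,4) by (simp only:)
  also have "\<dots> = m +> (\<one> \<oplus> \<one>)"
    by (intro m.a_rcos_sum one_closed)
  also have "\<dots> = m"
    using assms m.rcos_eq_self_iff by simp
  finally have "x \<oplus> y \<in> m"
    using xy m.rcos_eq_self_iff by simp
  then have "x \<oplus> y \<notin> Units R"
    using m.Units_notin[OF proper] by blast
  then have "x \<oplus> y \<in> zero_divisors R"
    using nonunit_zero_divisor[OF finite_carrier] xy by simp
  then show "total_graph_adj R x y"
    unfolding total_graph_adj_def using \<open>x \<noteq> y\<close> by simp
qed

lemma proper_colouring_unit_part: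
  assumes "inj_on idx principal_units" and "idx ` principal_units \<subseteq> {..<k}"
  shows "proper_colouring (Units R) (total_graph_adj R) k (idx \<circ> unit_part)"
  unfolding proper_colouring_def
proof (intro conjI ballI impI)
  fix x assume "x \<in> Units R"
  then show "(idx \<circ> unit_part) x < k"
    using assms(2) unit_part_mem by auto
next
  fix x y assume x: "x \<in> Units R" and y: "y \<in> Units R" and adj: "total_graph_adj R x y"
  show "(idx \<circ> unit_part) x \<noteq> (idx \<circ> unit_part) y"
  proof
    assume "(idx \<circ> unit_part) x = (idx \<circ> unit_part) y"
    then have h: "unit_part x = unit_part y"
      using assms(1) unit_part_mem x y unfolding inj_on_def by auto
    have "m +> x \<noteq> m +> y"
      using unit_part_mult[OF x] unit_part_mult[OF y] h adj unfolding total_graph_adj_def by metis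
    then have "s (m +> x) \<oplus> s (m +> y) \<in> Units R"
      by (intro s_add_Units rcos_Units_mem x y)
    then have "unit_part x \<otimes> (s (m +> x) \<oplus> s (m +> y)) \<in> Units R"
      using unit_part_mem[OF x] unfolding principal_units_def by blast
    moreover have "unit_part x \<otimes> (s (m +> x) \<oplus> s (m +> y)) = x \<oplus> y"
      using unit_part_mult[OF x] unit_part_mult[OF y] h unit_part_mem[OF x] s_Units rcos_Units_mem x y
      unfolding principal_units_def by (simp add: r_distr Units_closed)
    ultimately show False
      using adj Units_not_zero_divisor unfolding total_graph_adj_def by simp
  qed
qed


lemma chromatic_number_clique_number_Units:
  assumes "\<one> \<oplus> \<one> \<in> m"
  shows "chromatic_number (Units R) (total_graph_adj R) = card principal_units"
    and "clique_number (Units R) (total_graph_adj R) = card principal_units"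
proof -
  have "Units R \<subseteq> carrier R"
    unfolding Units_def by blast
  then have finU: "finite (Units R)"
    using finite_carrier by (rule finite_subset)
  have "principal_units \<subseteq> Units R"
    unfolding principal_units_def by blast
  then have "finite principal_units"
    using finU by (rule finite_subset)
  then obtain idx where "bij_betw idx principal_units {0..<card principal_units}"
    using ex_bij_betw_finite_nat by blast
  then have "inj_on idx principal_units" and "idx ` principal_units \<subseteq> {..<card principal_units}"
    unfolding bij_betw_def atLeast0LessThan by blast+
  then have "proper_colouring (Units R) (total_graph_adj R) (card principal_units) (idx \<circ> unit_part)"
    by (rule proper_colouring_unit_part)
  then show "chromatic_number (Units R) (total_graph_adj R) = card principal_units"
    and "clique_number (Units R) (total_graph_adj R) = card principal_units"
    using chromatic_number_eq_clique_number[OF finU principal_units_clique[OF assms]] by blast+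
qed
end

context cring begin

lemma exists_unit_transversal:
  assumes fin: "finite (carrier R)" and m: "maximalideal m R"
    and largest: "\<And>J. maximalideal J R \<Longrightarrow> card J \<le> card m" and two: "\<one> \<oplus> \<one> \<in> m"
  shows "\<exists>s. unit_transversal R m s"
proof -
  interpret m: maximalideal m R by fact
  let ?C = "a_rcosets m - {m}"
  let ?M = "{J. maximalideal J R}"
  have "?M \<subseteq> Pow (carrier R)"
    by (blast dest: maximalideal.axioms(1) ideal.Icarr)
  then have finM: "finite ?M"
    using finite_Pow_iff[THEN iffD2, OF fin] by (rule finite_subset)
  have "\<forall>J\<in>?M. \<exists>t. avoids_with_pairwise_sums R J ?C t \<and> (J = m \<longrightarrow> (\<forall>c\<in>?C. m +> t c = c))"
    using exists_avoiding_representatives[OF fin m largest two] by blast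
  from bchoice[OF this] obtain T where T: "\<forall>J\<in>?M. avoids_with_pairwise_sums R J ?C (T J)
      \<and> (J = m \<longrightarrow> (\<forall>c\<in>?C. m +> T J c = c))" ..
  have mM: "m \<in> ?M"
    using m by (rule CollectI)
  then have Tm: "avoids_with_pairwise_sums R m ?C (T m)" and Tm_rcos: "\<forall>c\<in>?C. m +> T m c = c"
    using T by blast+
  have "\<exists>x\<in>carrier R. \<forall>J\<in>?M. x \<ominus> T J c \<in> J" if "c \<in> ?C" for c
    using chinese_remainder_maximalideals[OF finM, of "\<lambda>J. T J c"] T that
    unfolding avoids_with_pairwise_sums_def by blast
  then have "\<forall>c\<in>?C. \<exists>x. x \<in> carrier R \<and> (\<forall>J\<in>?M. x \<ominus> T J c \<in> J)"
    by blast
  from bchoice[OF this] obtain s where s: "\<forall>c\<in>?C. s c \<in> carrier R \<and> (\<forall>J\<in>?M. s c \<ominus> T J c \<in> J)" ..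
  have avoids: "avoids_with_pairwise_sums R J ?C s" if "maximalideal J R" for J
    using ideal.avoids_with_pairwise_sums_cong[OF maximalideal.axioms(1)[OF that], of ?C "T J" s] T s that
    by blast
  have unit: "x \<in> Units R" if "x \<in> carrier R" "\<And>J. maximalideal J R \<Longrightarrow> x \<notin> J" for x
    using Units_iff_not_in_maximalideals[OF fin] that by blast
  have "unit_transversal R m s"
  proof (intro unit_transversal.intro unit_transversal_axioms.intro is_cring fin m.is_ideal)
    show "\<one> \<notin> m"
      by (rule m.one_notin)
    fix c assume c: "c \<in> ?C"
    have sc: "s c \<in> carrier R" "s c \<ominus> T m c \<in> m"
      using s c mM by blast+
    show "s c \<in> Units R"
    proof (rule unit)
      fix J assume "maximalideal J R"
      then show "s c \<notin> J"
        using avoids c unfolding avoids_with_pairwise_sums_def by blast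
    qed (rule sc(1))
    have "T m c \<in> carrier R"
      using Tm c unfolding avoids_with_pairwise_sums_def by blast
    then have "m +> s c = m +> T m c"
      using m.rcos_eq_iff[OF sc(1)] sc(2) by blast
    also have "\<dots> = c"
      using Tm_rcos c by blast
    finally show "m +> s c = c" .
    fix d assume d: "d \<in> ?C" "c \<noteq> d"
    have "s d \<in> carrier R"
      using s d(1) by blast
    then show "s c \<oplus> s d \<in> Units R"
    proof (intro unit add.m_closed sc(1))
      fix J assume "maximalideal J R"
      then show "s c \<oplus> s d \<notin> J"
        using avoids c d unfolding avoids_with_pairwise_sums_def by blast
    qed
  qed
  then show ?thesis
    by blast
qed

end

theorem theorem20:
  fixes R :: "('a, 'b) ring_scheme" and m :: "'a set"
  assumes "cring R"
    and "finite (carrier R)"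
    and "maximalideal m R"
    and "\<And>n. maximalideal n R \<Longrightarrow> card n \<le> card m"
    and "ring_characteristic (R Quot m) = 2"
  shows "chromatic_number (regular_elements R) (total_graph_adj R)
           = clique_number (regular_elements R) (total_graph_adj R)
         \<and> real (clique_number (regular_elements R) (total_graph_adj R))
           = real (card (regular_elements R)) / (real (card (carrier (R Quot m))) - 1)"
proof -
  interpret cring R by fact
  have two: "\<one>\<^bsub>R\<^esub> \<oplus>\<^bsub>R\<^esub> \<one>\<^bsub>R\<^esub> \<in> m"
    using maximalideal.axioms(1)[OF assms(3)] assms(5)
    by (rule ideal.one_add_one_mem_if_characteristic_Quot_2)
  obtain s where "unit_transversal R m s"
    using exists_unit_transversal[OF assms(2-4) two] by blast
  then interpret T: unit_transversal R m s .
  have "carrier (R Quot m) = a_rcosets\<^bsub>R\<^esub> m"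
    unfolding FactRing_def by simp
  then show ?thesis
    using T.chromatic_number_clique_number_Units[OF two] T.card_principal_units
      regular_elements_eq_Units[OF assms(2)] by simp
qed

end
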